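(* Assume $Q\ll P$ with $f=\frac{dQ}{dP}$. Let $R$ be a measurable function on $(\Omega,\mathcal F)$ with $\sigma(R)\subset\sigma(X)$ such that $P[Y\in G\mid\sigma(X)]=P[Y\in G\mid\sigma(R)]$ and $Q[Y\in G\mid\sigma(X)]=Q[Y\in G\mid\sigma(R)]$ for all $G\in\mathcal G$, and a regular conditional distribution $P_{Y|R}$ exists. Suppose that $P|\sigma(R,Y)$ and $Q|\sigma(R,Y)$ are related through label shift (generalized label shift), i.e. $P[R\in M\mid Y=\cdot]=Q[R\in M\mid Y=\cdot]$ (a.s. under $P_Y$ resp. $Q_Y$) for all measurable $M$. Let $g=\frac{dQ_Y}{dP_Y}$. Then $P$ and $Q$ are related through FJS with $$\frac{dQ}{dP}=\frac{E_P[f(X,Y)\mid\sigma(X)]}{E_P[g(Y)\mid\sigma(X)]}\,g(Y)$$ (with the convention $0/0=0$).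
   Context: Setting: $(\Omega_X,\mathcal H)$ and $(\Omega_Y,\mathcal G)$ are measurable spaces, $\Omega=\Omega_X\times\Omega_Y$, $\mathcal F=\mathcal H\otimes\mathcal G$, and $X,Y$ are the coordinate projections. $P$ and $Q$ are probability measures on $(\Omega,\mathcal F)$ with marginals $P_Y,Q_Y$. For a sub-$\sigma$-algebra $\mathcal C$, $P|\mathcal C$ is the restriction of $P$ to $\mathcal C$. $P$ and $Q$ are related through factorizable joint shift (FJS) if $\frac{dQ}{dP}=\hbar(X)\overline g(Y)$ for measurable non-negative $\hbar$ on $\Omega_X$ and $\overline g$ on $\Omega_Y$. A regular conditional distribution $P_{Y|R}$ is a map $(r,G)\mapsto P_{Y|R=r}[G]$ measurable in $r$, a probability measure in $G$, with $P[Y\in G\mid R=r]=P_{Y|R=r}[G]$ for a.e. $r$ and every $G$. *)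

theory Defs
  imports "HOL-Probability.Probability"
begin

text \<open>Factorizable joint shift on \<Omega> = \<Omega>X \<times> \<Omega>Y with X = fst, Y = snd:
  dQ/dP = hbar(X) * gbar(Y) for measurable non-negative hbar, gbar.\<close>
definition FJS :: "'x measure \<Rightarrow> 'y measure \<Rightarrow> ('x \<times> 'y) measure \<Rightarrow> ('x \<times> 'y) measure \<Rightarrow> bool" where
  "FJS MX MY P Q \<longleftrightarrow>
     (\<exists>hb gb. hb \<in> borel_measurable MX \<and> gb \<in> borel_measurable MY \<and>
        (\<forall>x\<in>space MX. hb x \<ge> 0) \<and> (\<forall>y\<in>space MY. gb y \<ge> 0) \<and>
        density P (\<lambda>\<omega>. ennreal (hb (fst \<omega>) * gb (snd \<omega>))) = Q)"

end

theory Submission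
  imports Defs
begin

text \<open>
  Under \<open>P\<close> the conditional law of \<open>Y\<close> given \<open>\<sigma>(X)\<close> is the kernel \<open>K(R)\<close>, so
  \<open>E\<^sub>P[g(Y) | \<sigma>(X)] = \<integral> g dK(R)\<close>. Label shift implies that on \<open>\<sigma>(R, Y)\<close> the measure \<open>Q\<close>
  has density \<open>g(Y)\<close> with respect to \<open>P\<close>, and Bayes' formula for conditional expectations
  turns this into \<open>Q[Y \<in> G | \<sigma>(R)] \<cdot> \<integral> g dK(R) = \<integral>\<^sub>G g dK(R)\<close>. Since under \<open>Q\<close>
  conditioning on \<open>\<sigma>(X)\<close> or on \<open>\<sigma>(R)\<close> gives the same law of \<open>Y\<close>, for a rectangle
  \<open>A \<times> G\<close>
    \<open>Q(A \<times> G) = \<integral>\<^bsub>X \<in> A\<^esub> Q[Y \<in> G | \<sigma>(R)] \<cdot> E\<^sub>P[f | \<sigma>(X)] dP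
      = \<integral>\<^bsub>X \<in> A\<^esub> E\<^sub>P[f | \<sigma>(X)] / E\<^sub>P[g(Y) | \<sigma>(X)] \<cdot> \<integral>\<^sub>G g dK(R) dP\<close>,
  which is the mass of \<open>A \<times> G\<close> under the density \<open>E\<^sub>P[f | \<sigma>(X)] / E\<^sub>P[g(Y) | \<sigma>(X)] \<cdot> g(Y)\<close>.
  The convention \<open>0 / 0 = 0\<close> is harmless because \<open>E\<^sub>P[f | \<sigma>(X)]\<close> vanishes wherever
  \<open>\<integral> g dK(R)\<close> does. Rectangles determine the measure, and a density of the form
  \<open>c(X) \<cdot> g(Y)\<close> is a factorizable joint shift.
\<close>

lemma subalgebra_vimage_algebra:
  "h \<in> measurable M N \<Longrightarrow> subalgebra M (vimage_algebra (space M) h N)"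
  unfolding subalgebra_def using sets_image_in_sets[of M "space M" h N] by simp

lemma (in finite_measure) sigma_finite_subalgebraI:
  "subalgebra M F \<Longrightarrow> sigma_finite_subalgebra M F"
  by (intro finite_measure_subalgebra_is_sigma_finite finite_measure_subalgebra.intro
      finite_measure_axioms) (simp add: finite_measure_subalgebra_axioms_def)

lemma absolutely_continuous_distr:
  assumes ac: "absolutely_continuous M N" and sets_N: "sets N = sets M"
    and T[measurable]: "T \<in> measurable M M'"
  shows "absolutely_continuous (distr M M' T) (distr N M' T)"
  unfolding absolutely_continuous_def
proof
  fix A assume "A \<in> null_sets (distr M M' T)"
  then have A[measurable]: "A \<in> sets M'" and "T -` A \<inter> space M \<in> null_sets M"
    by (auto simp: null_sets_def emeasure_distr)
  then have "T -` A \<inter> space N \<in> null_sets N"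
    using ac sets_eq_imp_space_eq[OF sets_N] unfolding absolutely_continuous_def by auto
  moreover have "T \<in> measurable N M'"
    by (subst measurable_cong_sets[OF sets_N refl]) (rule T)
  ultimately show "A \<in> null_sets (distr N M' T)"
    by (auto simp: null_sets_def emeasure_distr)
qed

lemma (in sigma_finite_measure) density_enn2real_RN_deriv:
  assumes "sigma_finite_measure N" "absolutely_continuous M N" "sets N = sets M"
  shows "density M (\<lambda>x. ennreal (enn2real (RN_deriv M N x))) = N"
proof -
  have "density M (\<lambda>x. ennreal (enn2real (RN_deriv M N x))) = density M (RN_deriv M N)"
    using RN_deriv_finite[OF assms]
    by (intro density_cong) (auto simp: ennreal_enn2real_if elim!: AE_mp)
  then show ?thesis using density_RN_deriv[OF assms(2,3)] by simp
qed

lemma ennreal_divide_times_cancel: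
  fixes a b :: real
  assumes "0 \<le> b" "b = 0 \<Longrightarrow> a \<le> 0"
  shows "ennreal (a / b) * ennreal b = ennreal a"
  using assms by (cases "b = 0") (auto simp: ennreal_neg ennreal_mult''[symmetric])

lemma measurable_vimage_algebra_eq:
  fixes h :: "'a \<Rightarrow> 'b::t1_space"
  assumes h: "h \<in> borel_measurable (vimage_algebra S f M)" and f: "f \<in> S \<rightarrow> space M"
    and uv: "u \<in> S" "v \<in> S" "f u = f v"
  shows "h u = h v"
proof -
  have "h -` {h u} \<inter> S \<in> sets (vimage_algebra S f M)"
    using measurable_sets[OF h, of "{h u}"] by simp
  then obtain A where A: "h -` {h u} \<inter> S = f -` A \<inter> S"
    unfolding sets_vimage_algebra2[OF f] by blast
  have "u \<in> f -` A \<inter> S"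
    using uv A by blast
  then have "v \<in> h -` {h u} \<inter> S"
    using uv A by simp
  then show ?thesis by simp
qed

lemma measure_eqI_rectangles:
  assumes sets_M: "sets M = sets (M1 \<Otimes>\<^sub>M M2)" and sets_N: "sets N = sets (M1 \<Otimes>\<^sub>M M2)"
    and fin: "emeasure M (space M1 \<times> space M2) \<noteq> \<infinity>"
    and eq: "\<And>A B. A \<in> sets M1 \<Longrightarrow> B \<in> sets M2 \<Longrightarrow> emeasure M (A \<times> B) = emeasure N (A \<times> B)"
  shows "M = N"
proof (rule measure_eqI_generator_eq[OF Int_stable_pair_measure_generator pair_measure_closed,
      where A="\<lambda>_. space M1 \<times> space M2"])
  show "sets M = sigma_sets (space M1 \<times> space M2) {A \<times> B |A B. A \<in> sets M1 \<and> B \<in> sets M2}"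
    "sets N = sigma_sets (space M1 \<times> space M2) {A \<times> B |A B. A \<in> sets M1 \<and> B \<in> sets M2}"
    using sets_M sets_N by (simp_all add: sets_pair_measure)
qed (use eq fin in auto)

section \<open>Conditional expectations and kernels\<close>

lemma (in sigma_finite_subalgebra) ennreal_real_cond_exp:
  assumes [measurable]: "f \<in> borel_measurable M" and nonneg: "\<And>x. 0 \<le> f x"
    and fin: "(\<integral>\<^sup>+x. f x \<partial>M) \<noteq> \<infinity>"
  shows "AE x in M. ennreal (real_cond_exp M F f x) = nn_cond_exp M F (\<lambda>x. ennreal (f x)) x"
proof -
  have "AE x in M. nn_cond_exp M F (\<lambda>x. 0) x = 0"
    using nn_cond_exp_F_meas[OF borel_measurable_const] by (rule eventually_mono) (rule sym)
  moreover have "(\<lambda>x. ennreal (- f x)) = (\<lambda>x. 0)"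
    using nonneg by (simp add: ennreal_neg)
  ultimately have "AE x in M. nn_cond_exp M F (\<lambda>x. ennreal (- f x)) x = 0"
    by simp
  moreover have "(\<integral>\<^sup>+x. nn_cond_exp M F (\<lambda>x. ennreal (f x)) x \<partial>M) \<noteq> \<infinity>"
    using nn_cond_exp_intg[of "\<lambda>_. 1" "\<lambda>x. ennreal (f x)"] fin by simp
  then have "AE x in M. nn_cond_exp M F (\<lambda>x. ennreal (f x)) x \<noteq> \<infinity>"
    by (intro nn_integral_PInf_AE) auto
  ultimately show ?thesis
    by eventually_elim (simp add: real_cond_exp_def ennreal_enn2real_if)
qed

lemma (in sigma_finite_subalgebra) ennreal_real_cond_exp_indicator_vimage:
  assumes [measurable]: "T \<in> measurable M N" "B \<in> sets N"
    and fin: "emeasure M (T -` B \<inter> space M) \<noteq> top"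
  shows "AE x in M. ennreal (real_cond_exp M F (indicator (T -` B \<inter> space M)) x)
    = nn_cond_exp M F (\<lambda>x. indicator B (T x)) x"
proof -
  have "AE x in M. ennreal (real_cond_exp M F (indicator (T -` B \<inter> space M)) x)
      = nn_cond_exp M F (indicator (T -` B \<inter> space M)) x"
    using ennreal_real_cond_exp[of "indicator (T -` B \<inter> space M)"] fin
    by (simp add: ennreal_indicator)
  moreover have "AE x in M. nn_cond_exp M F (indicator (T -` B \<inter> space M)) x
      = nn_cond_exp M F (\<lambda>x. indicator B (T x)) x"
    by (rule nn_cond_exp_cong) (auto intro!: AE_I2 split: split_indicator)
  ultimately show ?thesis by eventually_elim simp
qed

lemma (in sigma_finite_subalgebra) nn_integral_cond_kernel:
  assumes "space M \<noteq> {}"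
    and [measurable]: "Y \<in> measurable M N" "\<kappa> \<in> measurable M (subprob_algebra N)"
    and cond: "\<And>G. G \<in> sets N \<Longrightarrow>
      AE x in M. nn_cond_exp M F (\<lambda>x. indicator G (Y x)) x = emeasure (\<kappa> x) G"
    and [measurable]: "W \<in> borel_measurable F" "\<phi> \<in> borel_measurable N"
  shows "(\<integral>\<^sup>+x. W x * \<phi> (Y x) \<partial>M) = (\<integral>\<^sup>+x. W x * (\<integral>\<^sup>+y. \<phi> y \<partial>\<kappa> x) \<partial>M)"
proof -
  have [measurable]: "W \<in> borel_measurable M"
    by (rule measurable_from_subalg[OF subalg]) simp
  define D where "D = density M W"
  have sets_D[measurable_cong]: "sets D = sets M" and space_D: "space D = space M"
    unfolding D_def by simp_all
  have sets_\<kappa>: "sets (\<kappa> x) = sets N" if "x \<in> space D" for x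
    using measurable_space[OF assms(3)] that by (simp add: space_D space_subprob_algebra)
  \<comment> \<open>Under the weighted measure \<open>W \<cdot> M\<close>, the law of \<open>Y\<close> is the mixture of the kernel.\<close>
  have mixture: "distr D N Y = D \<bind> \<kappa>"
  proof (rule measure_eqI)
    have "sets (D \<bind> \<kappa>) = sets N"
    proof (rule sets_bind[OF sets_\<kappa>])
      show "space D \<noteq> {}" using assms(1) unfolding space_D .
    qed
    then show "sets (distr D N Y) = sets (D \<bind> \<kappa>)" by (simp only: sets_distr)
  next
    fix G assume "G \<in> sets (distr D N Y)"
    then have G[measurable]: "G \<in> sets N" by simp
    have "emeasure (distr D N Y) G = (\<integral>\<^sup>+x. W x * indicator (Y -` G \<inter> space M) x \<partial>M)"
      unfolding D_def by (simp add: emeasure_distr emeasure_density mult.commute)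
    also have "\<dots> = (\<integral>\<^sup>+x. W x * indicator G (Y x) \<partial>M)"
      by (auto intro!: nn_integral_cong split: split_indicator)
    also have "\<dots> = (\<integral>\<^sup>+x. W x * nn_cond_exp M F (\<lambda>x. indicator G (Y x)) x \<partial>M)"
      by (rule nn_cond_exp_intg[symmetric]) auto
    also have "\<dots> = (\<integral>\<^sup>+x. W x * emeasure (\<kappa> x) G \<partial>M)"
      using cond[OF G] by (intro nn_integral_cong_AE) auto
    also have "\<dots> = emeasure (D \<bind> \<kappa>) G"
      using assms(1) unfolding D_def
      by (simp add: emeasure_bind[where N=N] nn_integral_density measurable_emeasure_subprob_algebra)
    finally show "emeasure (distr D N Y) G = emeasure (D \<bind> \<kappa>) G" .
  qed
  have "(\<integral>\<^sup>+x. W x * \<phi> (Y x) \<partial>M) = (\<integral>\<^sup>+y. \<phi> y \<partial>distr D N Y)"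
    unfolding D_def by (simp add: nn_integral_distr nn_integral_density)
  also have "\<dots> = (\<integral>\<^sup>+x. (\<integral>\<^sup>+y. \<phi> y \<partial>\<kappa> x) \<partial>D)"
    unfolding mixture by (rule nn_integral_bind[where B=N]) auto
  also have "\<dots> = (\<integral>\<^sup>+x. W x * (\<integral>\<^sup>+y. \<phi> y \<partial>\<kappa> x) \<partial>M)"
    unfolding D_def
    by (subst nn_integral_density) (auto intro!: nn_integral_measurable_subprob_algebra2[where N=N])
  finally show ?thesis .
qed

lemma (in sigma_finite_subalgebra) nn_cond_exp_cond_kernel:
  assumes "space M \<noteq> {}"
    and [measurable]: "Y \<in> measurable M N" "\<kappa> \<in> measurable F (subprob_algebra N)"
    and cond: "\<And>G. G \<in> sets N \<Longrightarrow>
      AE x in M. nn_cond_exp M F (\<lambda>x. indicator G (Y x)) x = emeasure (\<kappa> x) G"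
    and [measurable]: "\<phi> \<in> borel_measurable N"
  shows "AE x in M. nn_cond_exp M F (\<lambda>x. \<phi> (Y x)) x = (\<integral>\<^sup>+y. \<phi> y \<partial>\<kappa> x)"
proof -
  have [measurable]: "\<kappa> \<in> measurable M (subprob_algebra N)"
    by (rule measurable_from_subalg[OF subalg]) simp
  have "AE x in M. (\<integral>\<^sup>+y. \<phi> y \<partial>\<kappa> x) = nn_cond_exp M F (\<lambda>x. \<phi> (Y x)) x"
  proof (rule nn_cond_exp_charact)
    fix A assume [measurable]: "A \<in> sets F"
    show "(\<integral>\<^sup>+x\<in>A. \<phi> (Y x) \<partial>M) = (\<integral>\<^sup>+x\<in>A. (\<integral>\<^sup>+y. \<phi> y \<partial>\<kappa> x) \<partial>M)"
      using nn_integral_cond_kernel[OF assms(1,2) _ cond, of "indicator A" \<phi>]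
      by (simp add: mult.commute)
  qed (auto intro!: nn_integral_measurable_subprob_algebra2[where N=N])
  then show ?thesis by (simp add: eq_commute)
qed

lemma nn_integral_density_on_subalgebra:
  assumes sub_M: "subalgebra M F" and sub_N: "subalgebra N F"
    and [measurable]: "w \<in> borel_measurable M"
    and dens: "\<And>A. A \<in> sets F \<Longrightarrow> emeasure N A = (\<integral>\<^sup>+x\<in>A. w x \<partial>M)"
    and [measurable]: "V \<in> borel_measurable F"
  shows "(\<integral>\<^sup>+x. V x \<partial>N) = (\<integral>\<^sup>+x. w x * V x \<partial>M)"
proof -
  have sub_wM: "subalgebra (density M w) F"
    using sub_M by (simp add: subalgebra_def)
  have restr_eq: "restr_to_subalg N F = restr_to_subalg (density M w) F"
  proof (rule measure_eqI)
    fix A assume "A \<in> sets (restr_to_subalg N F)"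
    then have A: "A \<in> sets F" and "A \<in> sets M"
      using sub_M by (auto simp: sets_restr_to_subalg[OF sub_N] subalgebra_def)
    then show "emeasure (restr_to_subalg N F) A = emeasure (restr_to_subalg (density M w) F) A"
      by (simp add: emeasure_restr_to_subalg sub_N sub_wM dens emeasure_density)
  qed (simp add: sets_restr_to_subalg sub_N sub_wM)
  have "(\<integral>\<^sup>+x. V x \<partial>N) = (\<integral>\<^sup>+x. V x \<partial>restr_to_subalg (density M w) F)"
    by (simp add: nn_integral_subalgebra2 sub_N flip: restr_eq)
  also have "\<dots> = (\<integral>\<^sup>+x. V x \<partial>density M w)"
    by (rule nn_integral_subalgebra2[OF sub_wM]) simp
  also have "\<dots> = (\<integral>\<^sup>+x. w x * V x \<partial>M)"
    by (rule nn_integral_density) (auto intro: measurable_from_subalg[OF sub_M])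
  finally show ?thesis .
qed

lemma nn_cond_exp_bayes:
  assumes P: "sigma_finite_subalgebra P F" and Q: "sigma_finite_subalgebra Q F"
    and sets_Q: "sets Q = sets P"
    and [measurable]: "w \<in> borel_measurable P" "Z \<in> borel_measurable P"
    and dens: "\<And>A. A \<in> sets F \<Longrightarrow> emeasure Q A = (\<integral>\<^sup>+x\<in>A. w x \<partial>P)"
    and dens_Z: "\<And>A. A \<in> sets F \<Longrightarrow> (\<integral>\<^sup>+x\<in>A. Z x \<partial>Q) = (\<integral>\<^sup>+x\<in>A. Z x * w x \<partial>P)"
  shows "AE x in P. nn_cond_exp Q F Z x * nn_cond_exp P F w x = nn_cond_exp P F (\<lambda>x. Z x * w x) x"
proof (rule sigma_finite_subalgebra.nn_cond_exp_charact[OF P])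
  interpret P: sigma_finite_subalgebra P F by (rule P)
  interpret Q: sigma_finite_subalgebra Q F by (rule Q)
  have [measurable]: "Z \<in> borel_measurable Q"
    using sets_Q by simp
  fix A assume [measurable]: "A \<in> sets F"
  have "(\<integral>\<^sup>+x\<in>A. Z x * w x \<partial>P) = (\<integral>\<^sup>+x. indicator A x * Z x \<partial>Q)"
    by (simp add: dens_Z mult.commute)
  also have "\<dots> = (\<integral>\<^sup>+x. indicator A x * nn_cond_exp Q F Z x \<partial>Q)"
    by (rule Q.nn_cond_exp_intg[symmetric]) auto
  also have "\<dots> = (\<integral>\<^sup>+x. w x * (indicator A x * nn_cond_exp Q F Z x) \<partial>P)"
    using dens by (intro nn_integral_density_on_subalgebra[OF P.subalg Q.subalg]) auto
  also have "\<dots> = (\<integral>\<^sup>+x. (indicator A x * nn_cond_exp Q F Z x) * nn_cond_exp P F w x \<partial>P)"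
    by (subst P.nn_cond_exp_intg) (auto simp: mult.commute)
  finally show "(\<integral>\<^sup>+x\<in>A. Z x * w x \<partial>P) = (\<integral>\<^sup>+x\<in>A. nn_cond_exp Q F Z x * nn_cond_exp P F w x \<partial>P)"
    by (simp add: ac_simps)
qed auto

lemma nn_integral_label_shift:
  fixes P Q :: "'a measure" and N :: "'b measure" and Y :: "'a \<Rightarrow> 'b"
  defines "FY \<equiv> vimage_algebra (space P) Y N"
  assumes P: "sigma_finite_subalgebra P FY" and Q: "sigma_finite_subalgebra Q FY"
    and sets_Q: "sets Q = sets P"
    and Y[measurable]: "Y \<in> measurable P N" and [measurable]: "Z \<in> borel_measurable P"
      "\<gamma> \<in> borel_measurable N" "h \<in> borel_measurable N" "\<phi> \<in> borel_measurable N"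
    and dens: "distr Q N Y = density (distr P N Y) \<gamma>"
    and cond_P: "AE x in P. nn_cond_exp P FY Z x = h (Y x)"
    and cond_Q: "AE x in Q. nn_cond_exp Q FY Z x = h (Y x)"
  shows "(\<integral>\<^sup>+x. Z x * \<phi> (Y x) \<partial>Q) = (\<integral>\<^sup>+x. Z x * (\<phi> (Y x) * \<gamma> (Y x)) \<partial>P)"
proof -
  interpret P: sigma_finite_subalgebra P FY by (rule P)
  interpret Q: sigma_finite_subalgebra Q FY by (rule Q)
  note [measurable_cong] = sets_Q
  have [measurable]: "Y \<in> measurable FY N"
    unfolding FY_def by (rule measurable_vimage_algebra1) (auto intro: measurable_space[OF Y])
  have "(\<integral>\<^sup>+x. Z x * \<phi> (Y x) \<partial>Q) = (\<integral>\<^sup>+x. \<phi> (Y x) * nn_cond_exp Q FY Z x \<partial>Q)"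
    by (subst Q.nn_cond_exp_intg) (auto simp: mult.commute)
  also have "\<dots> = (\<integral>\<^sup>+x. \<phi> (Y x) * h (Y x) \<partial>Q)"
    using cond_Q by (intro nn_integral_cong_AE) auto
  also have "\<dots> = (\<integral>\<^sup>+y. \<phi> y * h y \<partial>distr Q N Y)"
    by (rule nn_integral_distr[symmetric]) auto
  also have "\<dots> = (\<integral>\<^sup>+y. \<gamma> y * (\<phi> y * h y) \<partial>distr P N Y)"
    unfolding dens by (rule nn_integral_density) auto
  also have "\<dots> = (\<integral>\<^sup>+x. (\<phi> (Y x) * \<gamma> (Y x)) * h (Y x) \<partial>P)"
    by (simp add: nn_integral_distr ac_simps)
  also have "\<dots> = (\<integral>\<^sup>+x. (\<phi> (Y x) * \<gamma> (Y x)) * nn_cond_exp P FY Z x \<partial>P)"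
    using cond_P by (intro nn_integral_cong_AE) auto
  also have "\<dots> = (\<integral>\<^sup>+x. Z x * (\<phi> (Y x) * \<gamma> (Y x)) \<partial>P)"
    by (subst P.nn_cond_exp_intg) (auto simp: mult.commute)
  finally show ?thesis .
qed

lemma FJS_density_vimage_fst:
  assumes sets_P[measurable_cong]: "sets P = sets (MX \<Otimes>\<^sub>M MY)" and "space P \<noteq> {}"
    and c: "c \<in> borel_measurable (vimage_algebra (space P) fst MX)"
    and [measurable]: "g \<in> borel_measurable MY" and g_nonneg: "\<And>y. y \<in> space MY \<Longrightarrow> 0 \<le> g y"
    and dens: "density P (\<lambda>\<omega>. ennreal (c \<omega> * g (snd \<omega>))) = Q"
  shows "FJS MX MY P Q"
proof -
  have space_P: "space P = space MX \<times> space MY"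
    using sets_eq_imp_space_eq[OF sets_P] by (simp add: space_pair_measure)
  then obtain y0 where y0: "y0 \<in> space MY"
    using \<open>space P \<noteq> {}\<close> by auto
  have fst_P: "fst \<in> measurable P MX" by simp
  have [measurable]: "c \<in> borel_measurable P"
    using measurable_from_subalg[OF subalgebra_vimage_algebra[OF fst_P] c] .
  \<comment> \<open>The \<open>max\<close> does not change the density, since \<open>ennreal\<close> truncates negative values.\<close>
  define hb where "hb x = max 0 (c (x, y0))" for x
  have [measurable]: "hb \<in> borel_measurable MX"
    unfolding hb_def using y0 by measurable
  have c_fst: "c \<omega> = c (fst \<omega>, y0)" if "\<omega> \<in> space P" for \<omega>
    using that y0 space_P measurable_space[OF fst_P]
    by (intro measurable_vimage_algebra_eq[OF c]) auto
  have "density P (\<lambda>\<omega>. ennreal (hb (fst \<omega>) * g (snd \<omega>))) = Q"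
    unfolding dens[symmetric]
  proof (rule density_cong)
    show "AE \<omega> in P. ennreal (hb (fst \<omega>) * g (snd \<omega>)) = ennreal (c \<omega> * g (snd \<omega>))"
    proof (rule AE_I2)
      fix \<omega> assume \<omega>: "\<omega> \<in> space P"
      then have "0 \<le> g (snd \<omega>)"
        using g_nonneg space_P by auto
      then show "ennreal (hb (fst \<omega>) * g (snd \<omega>)) = ennreal (c \<omega> * g (snd \<omega>))"
        using c_fst[OF \<omega>] by (cases "0 \<le> c \<omega>") (auto simp: hb_def ennreal_neg mult_nonpos_nonneg)
    qed
  qed measurable
  then show ?thesis
    unfolding FJS_def using g_nonneg by (intro exI[of _ hb] exI[of _ g]) (auto simp: hb_def)
qed

section \<open>Generalized label shift\<close>

locale generalized_label_shift =
  fixes MX :: "'x measure" and MY :: "'y measure" and MR :: "'r measure"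
    and P Q :: "('x \<times> 'y) measure"
    and R :: "'x \<times> 'y \<Rightarrow> 'r" and K :: "'r \<Rightarrow> 'y measure"
  assumes P: "prob_space P" and Q: "prob_space Q"
    and sets_P: "sets P = sets (MX \<Otimes>\<^sub>M MY)" and sets_Q: "sets Q = sets (MX \<Otimes>\<^sub>M MY)"
    and ac: "absolutely_continuous P Q"
    and R_meas: "R \<in> measurable P MR"
    and R_X: "sets (vimage_algebra (space P) R MR) \<subseteq> sets (vimage_algebra (space P) fst MX)"
    and condP: "\<And>G. G \<in> sets MY \<Longrightarrow> AE \<omega> in P.
        real_cond_exp P (vimage_algebra (space P) fst MX) (indicator (snd -` G \<inter> space P)) \<omega>
      = real_cond_exp P (vimage_algebra (space P) R MR) (indicator (snd -` G \<inter> space P)) \<omega>"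
    and condQ: "\<And>G. G \<in> sets MY \<Longrightarrow> AE \<omega> in Q.
        real_cond_exp Q (vimage_algebra (space Q) fst MX) (indicator (snd -` G \<inter> space Q)) \<omega>
      = real_cond_exp Q (vimage_algebra (space Q) R MR) (indicator (snd -` G \<inter> space Q)) \<omega>"
    and K_kernel: "K \<in> MR \<rightarrow>\<^sub>M prob_algebra MY"
    and K_rcd: "\<And>G. G \<in> sets MY \<Longrightarrow> AE \<omega> in P.
        real_cond_exp P (vimage_algebra (space P) R MR) (indicator (snd -` G \<inter> space P)) \<omega>
      = measure (K (R \<omega>)) G"
    and label_shift: "\<And>M. M \<in> sets MR \<Longrightarrow> \<exists>h \<in> borel_measurable MY.
        (AE \<omega> in P. real_cond_exp P (vimage_algebra (space P) snd MY)
            (indicator (R -` M \<inter> space P)) \<omega> = h (snd \<omega>)) \<and>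
        (AE \<omega> in Q. real_cond_exp Q (vimage_algebra (space Q) snd MY)
            (indicator (R -` M \<inter> space Q)) \<omega> = h (snd \<omega>))"
begin

abbreviation "FX \<equiv> vimage_algebra (space P) fst MX"
abbreviation "FR \<equiv> vimage_algebra (space P) R MR"
abbreviation "FY \<equiv> vimage_algebra (space P) snd MY"
abbreviation "f \<equiv> \<lambda>\<omega>. enn2real (RN_deriv P Q \<omega>)"
abbreviation "g \<equiv> \<lambda>y. enn2real (RN_deriv (distr P MY snd) (distr Q MY snd) y)"
abbreviation "cond_f \<equiv> real_cond_exp P FX f"
abbreviation "cond_g \<equiv> real_cond_exp P FX (\<lambda>\<omega>. g (snd \<omega>))"

sublocale P: prob_space P by (rule P)
sublocale Q: prob_space Q by (rule Q)

declare sets_P[measurable_cong] sets_Q[measurable_cong]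

lemma space_Q: "space Q = space P"
  using sets_eq_imp_space_eq[of Q P] sets_P sets_Q by simp

lemma space_P: "space P = space MX \<times> space MY"
  using sets_eq_imp_space_eq[OF sets_P] by (simp add: space_pair_measure)

lemma R_measurable [measurable]: "R \<in> measurable P MR" "R \<in> measurable Q MR"
  using R_meas measurable_cong_sets[OF trans[OF sets_Q sets_P[symmetric]] refl] by simp_all

lemma projections_measurable [measurable]:
  "fst \<in> measurable P MX" "snd \<in> measurable P MY" "fst \<in> measurable Q MX" "snd \<in> measurable Q MY"
  by measurable

lemma subalgebras:
  "subalgebra P FX" "subalgebra P FR" "subalgebra P FY"
  "subalgebra Q FX" "subalgebra Q FR" "subalgebra Q FY"
  by (auto intro!: subalgebra_vimage_algebra[of _ P]
      subalgebra_vimage_algebra[of _ Q, unfolded space_Q] projections_measurable R_measurable)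

lemma subalgebra_FX_FR: "subalgebra FX FR"
  using R_X by (simp add: subalgebra_def)

sublocale PX: sigma_finite_subalgebra P FX by (rule P.sigma_finite_subalgebraI subalgebras)+
sublocale PR: sigma_finite_subalgebra P FR by (rule P.sigma_finite_subalgebraI subalgebras)+
sublocale PY: sigma_finite_subalgebra P FY by (rule P.sigma_finite_subalgebraI subalgebras)+
sublocale QX: sigma_finite_subalgebra Q FX by (rule Q.sigma_finite_subalgebraI subalgebras)+
sublocale QR: sigma_finite_subalgebra Q FR by (rule Q.sigma_finite_subalgebraI subalgebras)+
sublocale QY: sigma_finite_subalgebra Q FY by (rule Q.sigma_finite_subalgebraI subalgebras)+

lemma generators_measurable [measurable]:
  "fst \<in> measurable FX MX" "R \<in> measurable FR MR"
  using measurable_space[of fst P MX] measurable_space[of R P MR]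
  by (auto intro!: measurable_vimage_algebra1)

lemma measurable_from_FR [measurable_dest]:
  "h \<in> measurable FR N \<Longrightarrow> h \<in> measurable FX N"
  by (rule measurable_from_subalg[OF subalgebra_FX_FR])

lemma kernel_measurable [measurable]:
  "(\<lambda>\<omega>. K (R \<omega>)) \<in> measurable FR (subprob_algebra MY)"
  "(\<lambda>\<omega>. K (R \<omega>)) \<in> measurable FX (subprob_algebra MY)"
  "(\<lambda>\<omega>. K (R \<omega>)) \<in> measurable P (subprob_algebra MY)"
proof -
  show FR: "(\<lambda>\<omega>. K (R \<omega>)) \<in> measurable FR (subprob_algebra MY)"
    using measurable_prob_algebraD[OF K_kernel] by measurable
  then show FX: "(\<lambda>\<omega>. K (R \<omega>)) \<in> measurable FX (subprob_algebra MY)"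
    by (rule measurable_from_FR)
  show "(\<lambda>\<omega>. K (R \<omega>)) \<in> measurable P (subprob_algebra MY)"
    by (rule measurable_from_subalg[OF subalgebras(1) FX])
qed

lemma kernel_integral_measurable [measurable]:
  "\<phi> \<in> borel_measurable MY \<Longrightarrow> (\<lambda>\<omega>. \<integral>\<^sup>+y. \<phi> y \<partial>K (R \<omega>)) \<in> borel_measurable FR"
  by (rule nn_integral_measurable_subprob_algebra2[where N=MY]) simp_all

lemma emeasure_kernel_eq_measure:
  "\<omega> \<in> space P \<Longrightarrow> emeasure (K (R \<omega>)) G = ennreal (measure (K (R \<omega>)) G)"
  using measurable_space[OF K_kernel] measurable_space[OF R_meas]
  by (intro finite_measure.emeasure_eq_measure prob_space.finite_measure)
    (auto simp: space_prob_algebra)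

lemma cond_law_given_R:
  assumes [measurable]: "G \<in> sets MY"
  shows "AE \<omega> in P. nn_cond_exp P FR (\<lambda>\<omega>. indicator G (snd \<omega>)) \<omega> = emeasure (K (R \<omega>)) G"
  using PR.ennreal_real_cond_exp_indicator_vimage[OF projections_measurable(2) assms P.emeasure_finite]
    K_rcd[OF assms] AE_space
  by eventually_elim (simp_all add: emeasure_kernel_eq_measure)

lemma cond_law_given_X:
  assumes [measurable]: "G \<in> sets MY"
  shows "AE \<omega> in P. nn_cond_exp P FX (\<lambda>\<omega>. indicator G (snd \<omega>)) \<omega> = emeasure (K (R \<omega>)) G"
  using PX.ennreal_real_cond_exp_indicator_vimage[OF projections_measurable(2) assms P.emeasure_finite]
    condP[OF assms] K_rcd[OF assms] AE_space
  by eventually_elim (simp_all add: emeasure_kernel_eq_measure)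

lemma cond_Q_given_X_eq_given_R:
  assumes [measurable]: "G \<in> sets MY"
  shows "AE \<omega> in Q. nn_cond_exp Q FX (\<lambda>\<omega>. indicator G (snd \<omega>)) \<omega>
    = nn_cond_exp Q FR (\<lambda>\<omega>. indicator G (snd \<omega>)) \<omega>"
  using QX.ennreal_real_cond_exp_indicator_vimage[OF projections_measurable(4) assms Q.emeasure_finite]
    QR.ennreal_real_cond_exp_indicator_vimage[OF projections_measurable(4) assms Q.emeasure_finite]
    condQ[OF assms]
  by eventually_elim (simp_all add: space_Q)

lemma density_f: "density P (\<lambda>\<omega>. ennreal (f \<omega>)) = Q"
  by (rule P.density_enn2real_RN_deriv)
    (simp_all add: ac sets_P sets_Q prob_space_imp_sigma_finite Q)

lemma density_g: "density (distr P MY snd) (\<lambda>y. ennreal (g y)) = distr Q MY snd"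
proof (rule sigma_finite_measure.density_enn2real_RN_deriv)
  show "sigma_finite_measure (distr P MY snd)" "sigma_finite_measure (distr Q MY snd)"
    by (simp_all add: prob_space_imp_sigma_finite P.prob_space_distr Q.prob_space_distr)
  show "absolutely_continuous (distr P MY snd) (distr Q MY snd)"
    by (rule absolutely_continuous_distr[OF ac]) (simp_all add: sets_P sets_Q)
qed simp

lemma nn_integral_f: "(\<integral>\<^sup>+\<omega>. ennreal (f \<omega>) \<partial>P) = 1"
proof -
  have "(\<integral>\<^sup>+\<omega>. ennreal (f \<omega>) \<partial>P) = emeasure (density P (\<lambda>\<omega>. ennreal (f \<omega>))) (space P)"
    by (subst emeasure_density) (auto intro!: nn_integral_cong)
  then show ?thesis
    unfolding density_f using Q.emeasure_space_1 by (simp add: space_Q)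
qed

lemma nn_integral_g: "(\<integral>\<^sup>+\<omega>. ennreal (g (snd \<omega>)) \<partial>P) = 1"
proof -
  have "(\<integral>\<^sup>+\<omega>. ennreal (g (snd \<omega>)) \<partial>P) = (\<integral>\<^sup>+y. ennreal (g y) \<partial>distr P MY snd)"
    by (simp add: nn_integral_distr)
  also have "\<dots> = emeasure (density (distr P MY snd) (\<lambda>y. ennreal (g y))) (space MY)"
    by (subst emeasure_density) (auto intro!: nn_integral_cong)
  also have "\<dots> = emeasure Q (snd -` space MY \<inter> space Q)"
    unfolding density_g by (simp add: emeasure_distr)
  also have "\<dots> = 1"
    using Q.emeasure_space_1 by (simp add: space_Q space_P vimage_snd Times_Int_Times)
  finally show ?thesis .
qed

lemma nn_cond_exp_kernel:
  assumes "\<phi> \<in> borel_measurable MY"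
  shows "AE \<omega> in P. nn_cond_exp P FX (\<lambda>\<omega>. \<phi> (snd \<omega>)) \<omega> = (\<integral>\<^sup>+y. \<phi> y \<partial>K (R \<omega>))"
    and "AE \<omega> in P. nn_cond_exp P FR (\<lambda>\<omega>. \<phi> (snd \<omega>)) \<omega> = (\<integral>\<^sup>+y. \<phi> y \<partial>K (R \<omega>))"
  using assms P.not_empty cond_law_given_X cond_law_given_R
  by (intro PX.nn_cond_exp_cond_kernel[where N=MY] PR.nn_cond_exp_cond_kernel[where N=MY]; simp)+

lemma nn_integral_kernel:
  assumes "W \<in> borel_measurable FX" "\<phi> \<in> borel_measurable MY"
  shows "(\<integral>\<^sup>+\<omega>. W \<omega> * \<phi> (snd \<omega>) \<partial>P) = (\<integral>\<^sup>+\<omega>. W \<omega> * (\<integral>\<^sup>+y. \<phi> y \<partial>K (R \<omega>)) \<partial>P)"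
  using assms P.not_empty cond_law_given_X by (intro PX.nn_integral_cond_kernel[where N=MY]) simp_all

lemma nn_integral_Q_label_shift:
  assumes E: "E \<in> sets FR" and [measurable]: "\<phi> \<in> borel_measurable MY"
  shows "(\<integral>\<^sup>+\<omega>. indicator E \<omega> * \<phi> (snd \<omega>) \<partial>Q)
    = (\<integral>\<^sup>+\<omega>. indicator E \<omega> * (\<phi> (snd \<omega>) * ennreal (g (snd \<omega>))) \<partial>P)"
proof -
  obtain M where M[measurable]: "M \<in> sets MR" and E_eq: "E = R -` M \<inter> space P"
    using E measurable_space[OF R_meas] by (auto simp: sets_vimage_algebra2)
  obtain h where [measurable]: "h \<in> borel_measurable MY"
    and h_P: "AE \<omega> in P. real_cond_exp P FY (indicator E) \<omega> = h (snd \<omega>)"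
    and h_Q: "AE \<omega> in Q. real_cond_exp Q FY (indicator E) \<omega> = h (snd \<omega>)"
    using label_shift[OF M] by (auto simp: space_Q E_eq)
  have cond_P: "AE \<omega> in P. nn_cond_exp P FY (\<lambda>\<omega>. indicator M (R \<omega>)) \<omega> = ennreal (h (snd \<omega>))"
    using PY.ennreal_real_cond_exp_indicator_vimage[OF R_measurable(1) M P.emeasure_finite] h_P
    by eventually_elim (simp add: E_eq)
  have cond_Q: "AE \<omega> in Q. nn_cond_exp Q FY (\<lambda>\<omega>. indicator M (R \<omega>)) \<omega> = ennreal (h (snd \<omega>))"
    using QY.ennreal_real_cond_exp_indicator_vimage[OF R_measurable(2) M Q.emeasure_finite] h_Q
    by eventually_elim (simp add: E_eq space_Q)
  have indicator_E: "indicator E \<omega> = indicator M (R \<omega>)" if "\<omega> \<in> space P" for \<omega>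
    using that by (simp add: E_eq split: split_indicator)
  have "(\<integral>\<^sup>+\<omega>. indicator E \<omega> * \<phi> (snd \<omega>) \<partial>Q) = (\<integral>\<^sup>+\<omega>. indicator M (R \<omega>) * \<phi> (snd \<omega>) \<partial>Q)"
    by (intro nn_integral_cong) (simp add: space_Q indicator_E)
  also have "\<dots> = (\<integral>\<^sup>+\<omega>. indicator M (R \<omega>) * (\<phi> (snd \<omega>) * ennreal (g (snd \<omega>))) \<partial>P)"
    by (rule nn_integral_label_shift[OF PY.sigma_finite_subalgebra_axioms
          QY.sigma_finite_subalgebra_axioms _ _ _ _ _ _ density_g[symmetric] cond_P cond_Q])
      (simp_all add: sets_P sets_Q)
  also have "\<dots> = (\<integral>\<^sup>+\<omega>. indicator E \<omega> * (\<phi> (snd \<omega>) * ennreal (g (snd \<omega>))) \<partial>P)"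
    by (intro nn_integral_cong) (simp add: indicator_E)
  finally show ?thesis .
qed

lemma cond_exp_f: "AE \<omega> in P. ennreal (cond_f \<omega>) = nn_cond_exp P FX (\<lambda>\<omega>. ennreal (f \<omega>)) \<omega>"
  by (rule PX.ennreal_real_cond_exp) (simp_all add: nn_integral_f)

lemma cond_exp_g: "AE \<omega> in P. ennreal (cond_g \<omega>) = (\<integral>\<^sup>+y. g y \<partial>K (R \<omega>))"
proof -
  have "AE \<omega> in P. ennreal (cond_g \<omega>) = nn_cond_exp P FX (\<lambda>\<omega>. ennreal (g (snd \<omega>))) \<omega>"
    by (rule PX.ennreal_real_cond_exp) (simp_all add: nn_integral_g)
  moreover have "AE \<omega> in P. nn_cond_exp P FX (\<lambda>\<omega>. ennreal (g (snd \<omega>))) \<omega> = (\<integral>\<^sup>+y. g y \<partial>K (R \<omega>))"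
    by (rule nn_cond_exp_kernel(1)) simp
  ultimately show ?thesis by eventually_elim simp
qed

lemma cond_Q_given_R_Bayes:
  assumes [measurable]: "G \<in> sets MY"
  shows "AE \<omega> in P. nn_cond_exp Q FR (\<lambda>\<omega>. indicator G (snd \<omega>)) \<omega> * (\<integral>\<^sup>+y. g y \<partial>K (R \<omega>))
    = (\<integral>\<^sup>+y. indicator G y * ennreal (g y) \<partial>K (R \<omega>))"
proof -
  have "AE \<omega> in P. nn_cond_exp Q FR (\<lambda>\<omega>. indicator G (snd \<omega>)) \<omega> * nn_cond_exp P FR (\<lambda>\<omega>. g (snd \<omega>)) \<omega>
      = nn_cond_exp P FR (\<lambda>\<omega>. indicator G (snd \<omega>) * ennreal (g (snd \<omega>))) \<omega>"
  proof (rule nn_cond_exp_bayes[OF PR.sigma_finite_subalgebra_axioms QR.sigma_finite_subalgebra_axioms])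
    fix A assume A: "A \<in> sets FR"
    then have [measurable]: "A \<in> sets Q"
      using subalgebras(5) by (auto simp: subalgebra_def)
    show "emeasure Q A = (\<integral>\<^sup>+\<omega>\<in>A. g (snd \<omega>) \<partial>P)"
      using nn_integral_Q_label_shift[OF A, of "\<lambda>_. 1"] by (simp add: mult.commute)
    show "(\<integral>\<^sup>+\<omega>\<in>A. indicator G (snd \<omega>) \<partial>Q) = (\<integral>\<^sup>+\<omega>\<in>A. indicator G (snd \<omega>) * ennreal (g (snd \<omega>)) \<partial>P)"
      using nn_integral_Q_label_shift[OF A, of "indicator G"] by (simp add: ac_simps)
  qed (simp_all add: sets_P sets_Q)
  moreover have "AE \<omega> in P. nn_cond_exp P FR (\<lambda>\<omega>. g (snd \<omega>)) \<omega> = (\<integral>\<^sup>+y. g y \<partial>K (R \<omega>))"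
    by (rule nn_cond_exp_kernel(2)) simp
  moreover have "AE \<omega> in P. nn_cond_exp P FR (\<lambda>\<omega>. indicator G (snd \<omega>) * ennreal (g (snd \<omega>))) \<omega>
      = (\<integral>\<^sup>+y. indicator G y * ennreal (g y) \<partial>K (R \<omega>))"
    by (rule nn_cond_exp_kernel(2)) simp
  ultimately show ?thesis by eventually_elim simp
qed

lemma cond_f_nonpos_if_kernel_g_zero:
  "AE \<omega> in P. (\<integral>\<^sup>+y. g y \<partial>K (R \<omega>)) = 0 \<longrightarrow> cond_f \<omega> \<le> 0"
proof -
  define Z where "Z = (\<lambda>\<omega>. \<integral>\<^sup>+y. g y \<partial>K (R \<omega>)) -` {0} \<inter> space P"
  have Z_FR: "Z \<in> sets FR"
    unfolding Z_def using measurable_sets[OF kernel_integral_measurable, of "\<lambda>y. ennreal (g y)" "{0}"]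
    by simp
  then have Z[measurable]: "Z \<in> sets FX" "Z \<in> sets P"
    using R_X subalgebras(1) by (auto simp: subalgebra_def)
  have "(\<integral>\<^sup>+\<omega>. indicator Z \<omega> * ennreal (cond_f \<omega>) \<partial>P) = (\<integral>\<^sup>+\<omega>. indicator Z \<omega> * ennreal (f \<omega>) \<partial>P)"
    using cond_exp_f by (subst PX.nn_cond_exp_intg[symmetric]) (auto intro!: nn_integral_cong_AE)
  also have "\<dots> = emeasure (density P (\<lambda>\<omega>. ennreal (f \<omega>))) Z"
    by (simp add: emeasure_density mult.commute)
  also have "\<dots> = (\<integral>\<^sup>+\<omega>. indicator Z \<omega> \<partial>Q)"
    using Z(2) by (simp add: density_f sets_P sets_Q)
  also have "\<dots> = (\<integral>\<^sup>+\<omega>. indicator Z \<omega> * ennreal (g (snd \<omega>)) \<partial>P)"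
    using nn_integral_Q_label_shift[OF Z_FR, of "\<lambda>_. 1"] by simp
  also have "\<dots> = (\<integral>\<^sup>+\<omega>. indicator Z \<omega> * (\<integral>\<^sup>+y. g y \<partial>K (R \<omega>)) \<partial>P)"
    by (rule nn_integral_kernel) simp_all
  also have "\<dots> = (\<integral>\<^sup>+\<omega>. 0 \<partial>P)"
    by (intro nn_integral_cong) (simp add: Z_def split: split_indicator)
  finally have "AE \<omega> in P. indicator Z \<omega> * ennreal (cond_f \<omega>) = 0"
    by (simp add: nn_integral_0_iff_AE)
  with AE_space show ?thesis
    by eventually_elim (auto simp: Z_def ennreal_eq_0_iff split: split_indicator)
qed

lemma cond_ratio_times_kernel:
  assumes "G \<in> sets MY"
  shows "AE \<omega> in P. ennreal (cond_f \<omega> / cond_g \<omega>) * (\<integral>\<^sup>+y. indicator G y * ennreal (g y) \<partial>K (R \<omega>))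
    = nn_cond_exp Q FR (\<lambda>\<omega>. indicator G (snd \<omega>)) \<omega> * ennreal (cond_f \<omega>)"
proof -
  have "AE \<omega> in P. 0 \<le> cond_g \<omega>"
    by (rule PX.real_cond_exp_pos) simp_all
  with cond_Q_given_R_Bayes[OF assms] cond_exp_g cond_f_nonpos_if_kernel_g_zero show ?thesis
  proof eventually_elim
    case (elim \<omega>)
    have cancel: "ennreal (cond_f \<omega> / cond_g \<omega>) * ennreal (cond_g \<omega>) = ennreal (cond_f \<omega>)"
      using elim by (intro ennreal_divide_times_cancel) auto
    have "ennreal (cond_f \<omega> / cond_g \<omega>) * (\<integral>\<^sup>+y. indicator G y * ennreal (g y) \<partial>K (R \<omega>))
        = nn_cond_exp Q FR (\<lambda>\<omega>. indicator G (snd \<omega>)) \<omega>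
          * (ennreal (cond_f \<omega> / cond_g \<omega>) * ennreal (cond_g \<omega>))"
      by (simp only: elim(1)[symmetric] elim(2) ac_simps)
    then show ?case
      by (simp only: cancel)
  qed
qed

lemma emeasure_Q_rectangle:
  assumes [measurable]: "A \<in> sets MX" "G \<in> sets MY"
  shows "emeasure Q (A \<times> G) = (\<integral>\<^sup>+\<omega>. indicator A (fst \<omega>)
    * nn_cond_exp Q FR (\<lambda>\<omega>. indicator G (snd \<omega>)) \<omega> * ennreal (cond_f \<omega>) \<partial>P)"
proof -
  let ?q = "nn_cond_exp Q FR (\<lambda>\<omega>. indicator G (snd \<omega>))"
  have "A \<times> G \<in> sets Q"
    by (simp add: sets_Q)
  then have "emeasure Q (A \<times> G) = (\<integral>\<^sup>+\<omega>. indicator A (fst \<omega>) * indicator G (snd \<omega>) \<partial>Q)"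
    by (simp add: indicator_times nn_integral_indicator[symmetric] del: nn_integral_indicator)
  also have "\<dots> = (\<integral>\<^sup>+\<omega>. indicator A (fst \<omega>) * nn_cond_exp Q FX (\<lambda>\<omega>. indicator G (snd \<omega>)) \<omega> \<partial>Q)"
    by (rule QX.nn_cond_exp_intg[symmetric]) simp_all
  also have "\<dots> = (\<integral>\<^sup>+\<omega>. indicator A (fst \<omega>) * ?q \<omega> \<partial>Q)"
    using cond_Q_given_X_eq_given_R[OF assms(2)] by (intro nn_integral_cong_AE) auto
  also have "\<dots> = (\<integral>\<^sup>+\<omega>. indicator A (fst \<omega>) * ?q \<omega> \<partial>density P (\<lambda>\<omega>. ennreal (f \<omega>)))"
    by (simp add: density_f)
  also have "\<dots> = (\<integral>\<^sup>+\<omega>. ennreal (f \<omega>) * (indicator A (fst \<omega>) * ?q \<omega>) \<partial>P)"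
    by (rule nn_integral_density) simp_all
  also have "\<dots> = (\<integral>\<^sup>+\<omega>. indicator A (fst \<omega>) * ?q \<omega> * nn_cond_exp P FX (\<lambda>\<omega>. ennreal (f \<omega>)) \<omega> \<partial>P)"
    by (subst PX.nn_cond_exp_intg) (simp_all add: mult.commute)
  also have "\<dots> = (\<integral>\<^sup>+\<omega>. indicator A (fst \<omega>) * ?q \<omega> * ennreal (cond_f \<omega>) \<partial>P)"
    using cond_exp_f by (intro nn_integral_cong_AE) auto
  finally show ?thesis .
qed

lemma emeasure_density_cond_ratio_rectangle:
  assumes [measurable]: "A \<in> sets MX" "G \<in> sets MY"
  shows "emeasure (density P (\<lambda>\<omega>. ennreal (cond_f \<omega> / cond_g \<omega> * g (snd \<omega>)))) (A \<times> G)
    = emeasure Q (A \<times> G)"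
proof -
  let ?W = "\<lambda>\<omega>. indicator A (fst \<omega>) * ennreal (cond_f \<omega> / cond_g \<omega>)"
  have "emeasure (density P (\<lambda>\<omega>. ennreal (cond_f \<omega> / cond_g \<omega> * g (snd \<omega>)))) (A \<times> G)
      = (\<integral>\<^sup>+\<omega>. ?W \<omega> * (indicator G (snd \<omega>) * ennreal (g (snd \<omega>))) \<partial>P)"
    unfolding ennreal_mult''[OF enn2real_nonneg]
    by (subst emeasure_density) (auto intro!: nn_integral_cong simp: indicator_times ac_simps)
  also have "\<dots> = (\<integral>\<^sup>+\<omega>. ?W \<omega> * (\<integral>\<^sup>+y. indicator G y * ennreal (g y) \<partial>K (R \<omega>)) \<partial>P)"
    by (rule nn_integral_kernel) simp_all
  also have "\<dots> = emeasure Q (A \<times> G)"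
    unfolding emeasure_Q_rectangle[OF assms] using cond_ratio_times_kernel[OF assms(2)]
    by (intro nn_integral_cong_AE) (auto simp: mult.assoc)
  finally show ?thesis .
qed

theorem density_cond_ratio:
  "density P (\<lambda>\<omega>. ennreal (cond_f \<omega> / cond_g \<omega> * g (snd \<omega>))) = Q"
proof (rule measure_eqI_rectangles[OF _ sets_Q])
  show "emeasure (density P (\<lambda>\<omega>. ennreal (cond_f \<omega> / cond_g \<omega> * g (snd \<omega>))))
      (space MX \<times> space MY) \<noteq> \<infinity>"
    by (subst emeasure_density_cond_ratio_rectangle) (simp_all add: Q.emeasure_finite)
qed (simp_all only: sets_density sets_P emeasure_density_cond_ratio_rectangle)

theorem FJS: "FJS MX MY P Q"
  by (rule FJS_density_vimage_fst[OF sets_P P.not_empty _ _ _ density_cond_ratio]) simp_all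

end

theorem corollary4:
  fixes MX :: "'x measure" and MY :: "'y measure" and MR :: "'r measure"
    and P Q :: "('x \<times> 'y) measure"
    and R :: "'x \<times> 'y \<Rightarrow> 'r" and K :: "'r \<Rightarrow> 'y measure"
  assumes P: "prob_space P" and Q: "prob_space Q"
    and sP: "sets P = sets (MX \<Otimes>\<^sub>M MY)" and sQ: "sets Q = sets (MX \<Otimes>\<^sub>M MY)"
    and ac: "absolutely_continuous P Q"
    and R_meas: "R \<in> measurable P MR"
    and R_X: "sets (vimage_algebra (space P) R MR) \<subseteq> sets (vimage_algebra (space P) fst MX)"
    and condP: "\<And>G. G \<in> sets MY \<Longrightarrow> AE \<omega> in P.
        real_cond_exp P (vimage_algebra (space P) fst MX) (indicator (snd -` G \<inter> space P)) \<omega>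
      = real_cond_exp P (vimage_algebra (space P) R MR) (indicator (snd -` G \<inter> space P)) \<omega>"
    and condQ: "\<And>G. G \<in> sets MY \<Longrightarrow> AE \<omega> in Q.
        real_cond_exp Q (vimage_algebra (space Q) fst MX) (indicator (snd -` G \<inter> space Q)) \<omega>
      = real_cond_exp Q (vimage_algebra (space Q) R MR) (indicator (snd -` G \<inter> space Q)) \<omega>"
    and K_kernel: "K \<in> MR \<rightarrow>\<^sub>M prob_algebra MY"
    and K_rcd: "\<And>G. G \<in> sets MY \<Longrightarrow> AE \<omega> in P.
        real_cond_exp P (vimage_algebra (space P) R MR) (indicator (snd -` G \<inter> space P)) \<omega>
      = measure (K (R \<omega>)) G"
    and label_shift: "\<And>M. M \<in> sets MR \<Longrightarrow> \<exists>h \<in> borel_measurable MY.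
        (AE \<omega> in P. real_cond_exp P (vimage_algebra (space P) snd MY)
            (indicator (R -` M \<inter> space P)) \<omega> = h (snd \<omega>)) \<and>
        (AE \<omega> in Q. real_cond_exp Q (vimage_algebra (space Q) snd MY)
            (indicator (R -` M \<inter> space Q)) \<omega> = h (snd \<omega>))"
  defines "f \<equiv> (\<lambda>\<omega>. enn2real (RN_deriv P Q \<omega>))"
    and "g \<equiv> (\<lambda>y. enn2real (RN_deriv (distr P MY snd) (distr Q MY snd) y))"
  shows "FJS MX MY P Q \<and>
    density P (\<lambda>\<omega>. ennreal
       (real_cond_exp P (vimage_algebra (space P) fst MX) f \<omega>
        / real_cond_exp P (vimage_algebra (space P) fst MX) (\<lambda>\<omega>'. g (snd \<omega>')) \<omega>
        * g (snd \<omega>))) = Q"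
proof -
  have model: "generalized_label_shift MX MY MR P Q R K"
    by (rule generalized_label_shift.intro) (fact assms)+
  show ?thesis
    unfolding f_def g_def
    using generalized_label_shift.FJS[OF model] generalized_label_shift.density_cond_ratio[OF model]
    by blast
qed

end
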